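(* Let $\lambda, v, u$ be positive integers and let $M=m_1,m_2,\ldots,m_t$ be a sequence of integers with $m_1\leq m_2\leq\cdots\leq m_t$ and $m_i\equiv 0\pmod{2}$ for all $i\in\{1,2,\ldots,t\}$. If there exists an $(M)$-cycle decomposition of $\lambda K_{v,u}$, then all of the following hold: (a) $m_t\leq 2\min(\{v,u\})$; (b) $\lambda v\equiv \lambda u\equiv 0\pmod{2}$; (c) $t\leq \frac{\lambda}{2}vu-m_t+2$ if $\lambda$ is even; (d) $2\nu_2(M)\leq (\lambda-1)vu$ if $\lambda$ is odd.
   Context: $\lambda K_{v,u}$ denotes the multigraph with vertex set $V\cup U$, where $V,U$ are disjoint, $|V|=v$, $|U|=u$, in which every $x\in V$ and $y\in U$ are joined by exactly $\lambda$ parallel edges and there are no other edges. For $m\geq 2$, an $m$-cycle is a subgraph consisting of $m$ distinct vertices $x_0,\ldots,x_{m-1}$ and one edge joining $x_i$ and $x_{i+1}$ for each $i$ (indices mod $m$); in particular a $2$-cycle consists of two parallel edges between two vertices. An $(M)$-cycle decomposition of a multigraph $G$, for $M=m_1,\ldots,m_t$, is a partition of the edge set of $G$ into $t$ cycles of lengths $m_1,\ldots,m_t$ respectively. $\nu_k(M)$ denotes the number of indices $i$ with $m_i=k$. *)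

theory Defs
  imports Complex_Main
begin

(* Vertices of lambda K_{v,u}: Inl a (a < v) form V, Inr b (b < u) form U.
   Edges: triples (a, b, k) with a < v, b < u, k < lambda; the k-th of the
   lambda parallel edges joining Inl a and Inr b. *)

type_synonym vert = "nat + nat"
type_synonym edge = "nat \<times> nat \<times> nat"

definition lKvu_edges :: "nat \<Rightarrow> nat \<Rightarrow> nat \<Rightarrow> edge set" where
  "lKvu_edges lam v u = {(a, b, k). a < v \<and> b < u \<and> k < lam}"

definition joins :: "edge \<Rightarrow> vert \<Rightarrow> vert \<Rightarrow> bool" where
  "joins e x y \<longleftrightarrow> (case e of (a, b, k) \<Rightarrow> {x, y} = {Inl a, Inr b})"

definition is_cycle :: "nat \<Rightarrow> edge set \<Rightarrow> bool" where
  "is_cycle m C \<longleftrightarrow> m \<ge> 2 \<and>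
     (\<exists>xs :: vert list. \<exists>es :: edge list.
        length xs = m \<and> distinct xs \<and> length es = m \<and> distinct es \<and> set es = C \<and>
        (\<forall>i<m. joins (es ! i) (xs ! i) (xs ! ((i + 1) mod m))))"

definition cycle_decomposition :: "edge set \<Rightarrow> nat list \<Rightarrow> bool" where
  "cycle_decomposition E ms \<longleftrightarrow>
     (\<exists>Cs :: edge set list. length Cs = length ms \<and>
        (\<forall>i<length ms. is_cycle (ms ! i) (Cs ! i)) \<and>
        (\<forall>i<length ms. \<forall>j<length ms. i \<noteq> j \<longrightarrow> Cs ! i \<inter> Cs ! j = {}) \<and>
        (\<Union>i<length ms. Cs ! i) = E)"

definition nu :: "nat \<Rightarrow> nat list \<Rightarrow> nat" where
  "nu k ms = card {i. i < length ms \<and> ms ! i = k}"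

end

theory Submission
  imports Defs
begin

(*
  A cycle of lambda K_{v,u} meets each vertex in 0 or 2 edges and alternates between the
  sides V and U, so an m-cycle has exactly m/2 vertices on each side; this gives (a), and
  counting the edges at one vertex (an even number per cycle) gives (b).

  For (c) let lambda be even, C any cycle and B \<subseteq> V a set splitting the V-vertices
  of C. Walking around C one finds a vertex b \<in> U with exactly one C-edge into B.
  The lambda |B| edges between b and B are even in number, and a cycle whose V-vertices
  are not split by B contributes 0 or 2 of them; hence B splits another cycle. So the
  V-vertex set of C lies in one connected component of the hypergraph formed by the
  V-vertex sets of the other cycles, whence |C|/2 \<le> 1 + \<Sum>(m_i/2 - 1) over the other
  cycles; with \<Sum> m_i = lambda v u and |C| = m_t this is (c).

  For (d) a 2-cycle is a pair of parallel edges, so for odd lambda the 2-cycles use at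
  most lambda - 1 of the lambda edges joining any two vertices.
*)

definition ends :: "edge \<Rightarrow> vert set" where
  "ends e = {Inl (fst e), Inr (fst (snd e))}"

lemma joins_iff_ends: "joins e x y \<longleftrightarrow> {x, y} = ends e"
  by (cases e) (auto simp: joins_def ends_def)

lemma Inl_in_ends_iff [simp]: "Inl a \<in> ends e \<longleftrightarrow> fst e = a"
  by (auto simp: ends_def)

lemma Inr_in_ends_iff [simp]: "Inr b \<in> ends e \<longleftrightarrow> fst (snd e) = b"
  by (auto simp: ends_def)

lemma Suc_mod_inj: "i < m \<Longrightarrow> k < m \<Longrightarrow> Suc k mod m = Suc i mod m \<Longrightarrow> k = i"
  by (auto simp: mod_Suc split: if_splits)

lemma cyclically_invariant_const:
  assumes "\<And>i. i < m \<Longrightarrow> g (Suc i mod m) = g i" and "k < m"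
  shows "g k = g 0"
  using assms(2)
proof (induction k)
  case (Suc k)
  then show ?case using assms(1)[of k] by simp
qed simp

definition splits :: "'a set \<Rightarrow> 'a set \<Rightarrow> bool" where
  "splits B A \<longleftrightarrow> A \<inter> B \<noteq> {} \<and> \<not> A \<subseteq> B"

locale cycle_seq =
  fixes m :: nat and xs :: "vert list" and es :: "edge list"
  assumes two_le_m: "2 \<le> m"
    and length_xs: "length xs = m" and distinct_xs: "distinct xs"
    and length_es: "length es = m" and distinct_es: "distinct es"
    and joins_es: "i < m \<Longrightarrow> joins (es ! i) (xs ! i) (xs ! (Suc i mod m))"

lemma is_cycleE:
  assumes "is_cycle m C"
  obtains xs es where "cycle_seq m xs es" "set es = C"
  using assms unfolding is_cycle_def cycle_seq_def by auto

context cycle_seq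
begin

lemma ends_es: "i < m \<Longrightarrow> ends (es ! i) = {xs ! i, xs ! (Suc i mod m)}"
  using joins_es by (simp add: joins_iff_ends)

lemma filter_set_es: "{e \<in> set es. P e} = (\<lambda>k. es ! k) ` {k. k < m \<and> P (es ! k)}"
  unfolding set_conv_nth length_es by blast

lemma incident_edges_Suc:
  assumes "i < m"
  shows "{e \<in> set es. xs ! (Suc i mod m) \<in> ends e} = {es ! i, es ! (Suc i mod m)}"
proof -
  have Suc_i: "Suc i mod m < m" using two_le_m by simp
  have "xs ! (Suc i mod m) \<in> ends (es ! k) \<longleftrightarrow> k = i \<or> k = Suc i mod m" if "k < m" for k
  proof -
    have "Suc k mod m < m" using two_le_m by simp
    then have "xs ! (Suc i mod m) = xs ! (Suc k mod m) \<longleftrightarrow> k = i"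
      using Suc_i Suc_mod_inj[OF assms that] by (auto simp: nth_eq_iff_index_eq[OF distinct_xs] length_xs)
    moreover have "xs ! (Suc i mod m) = xs ! k \<longleftrightarrow> k = Suc i mod m"
      using Suc_i that by (auto simp: nth_eq_iff_index_eq[OF distinct_xs] length_xs)
    ultimately show ?thesis by (auto simp: ends_es[OF that])
  qed
  then have "{k. k < m \<and> xs ! (Suc i mod m) \<in> ends (es ! k)} = {i, Suc i mod m}"
    using assms Suc_i by auto
  then show ?thesis by (simp add: filter_set_es)
qed

lemma card_incident: "card {e \<in> set es. w \<in> ends e} = (if w \<in> set xs then 2 else 0)"
proof (cases "w \<in> set xs")
  case True
  then obtain p where p: "p < m" "w = xs ! p" by (auto simp: in_set_conv_nth length_xs)
  define i where "i = (if p = 0 then m - 1 else p - 1)"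
  have i: "i < m" "Suc i mod m = p"
    using p two_le_m by (auto simp: i_def)
  have "i \<noteq> Suc i mod m" using i p two_le_m by (auto simp: i_def)
  then have "es ! i \<noteq> es ! (Suc i mod m)"
    using i p by (simp add: nth_eq_iff_index_eq[OF distinct_es] length_es)
  then show ?thesis using incident_edges_Suc[OF i(1)] i(2) p True by simp
next
  case False
  have "w \<notin> ends (es ! k)" if "k < m" for k
    using ends_es[OF that] False nth_mem[of k xs] nth_mem[of "Suc k mod m" xs] that two_le_m
    by (auto simp: length_xs)
  then have "\<forall>e \<in> set es. w \<notin> ends e" by (metis in_set_conv_nth length_es)
  then show ?thesis using False by simp
qed

lemma crossing_vertex:
  assumes "splits B (fst ` set es)"
  shows "\<exists>b. card {e \<in> set es. fst (snd e) = b \<and> fst e \<in> B} = 1"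
proof -
  define g where "g k \<longleftrightarrow> fst (es ! k) \<in> B" for k
  have "\<exists>i<m. g i \<noteq> g (Suc i mod m)"
  proof (rule ccontr)
    assume no_change: "\<not> ?thesis"
    have "g k = g 0" if "k < m" for k
      by (rule cyclically_invariant_const[OF _ that]) (use no_change in blast)
    then have "\<forall>e \<in> set es. fst e \<in> B \<longleftrightarrow> g 0"
      unfolding set_conv_nth length_es g_def by blast
    then show False using assms unfolding splits_def by (cases "g 0") auto
  qed
  then obtain i where i: "i < m" "g i \<noteq> g (Suc i mod m)" by blast
  define j where "j = Suc i mod m"
  have j: "j < m" using two_le_m by (simp add: j_def)
  \<comment> \<open>the edges i and j meet at xs ! j and have different V-ends, so xs ! j lies in U\<close>
  obtain b where b: "xs ! j = Inr b"
  proof (cases "xs ! j")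
    case (Inl a)
    then have "Inl a \<in> ends (es ! i)" "Inl a \<in> ends (es ! j)"
      using ends_es[OF i(1)] ends_es[OF j] by (simp_all add: j_def)
    then show ?thesis using i(2) by (simp add: g_def j_def)
  qed
  have "{e \<in> set es. fst (snd e) = b} = {es ! i, es ! j}"
    using incident_edges_Suc[OF i(1)] b by (simp add: j_def)
  then have "{e \<in> set es. fst (snd e) = b \<and> fst e \<in> B} = {e \<in> {es ! i, es ! j}. fst e \<in> B}"
    by blast
  also have "\<dots> = (if g i then {es ! i} else {es ! j})"
    using i(2) by (auto simp: g_def j_def)
  finally have "card {e \<in> set es. fst (snd e) = b \<and> fst e \<in> B} = 1" by simp
  then show ?thesis by blast
qed

end

lemma card_eq_sum_card_fibres:
  assumes "finite A" and "finite T" and "f ` A \<subseteq> T"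
  shows "card A = (\<Sum>y\<in>T. card {x \<in> A. f x = y})"
proof -
  have "(\<Sum>y\<in>T. \<Sum>x\<in>{x \<in> A. f x = y}. 1::nat) = (\<Sum>x\<in>A. 1)"
    by (rule sum.group) (use assms in auto)
  then show ?thesis by simp
qed

lemma card_eq_twice_card_image:
  assumes "finite C" and "\<And>y. y \<in> f ` C \<Longrightarrow> card {x \<in> C. f x = y} = 2"
  shows "card C = 2 * card (f ` C)"
  using card_eq_sum_card_fibres[OF assms(1) finite_imageI[OF assms(1)] subset_refl, of f] assms(2)
  by simp

lemma is_cycle_finite: "is_cycle m C \<Longrightarrow> finite C"
  by (erule is_cycleE) auto

lemma is_cycle_card: "is_cycle m C \<Longrightarrow> card C = m"
  by (erule is_cycleE) (auto simp: cycle_seq_def distinct_card)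

lemma is_cycle_card_incident:
  assumes "is_cycle m C"
  shows "card {e \<in> C. w \<in> ends e} \<in> {0, 2}"
proof -
  obtain xs es where cycle: "cycle_seq m xs es" and C: "set es = C" using assms by (rule is_cycleE)
  show ?thesis using cycle_seq.card_incident[OF cycle, of w] by (simp add: C)
qed

lemma is_cycle_even_card_incident:
  assumes "is_cycle m C"
  shows "even (card {e \<in> C. w \<in> ends e})"
  using is_cycle_card_incident[OF assms, of w] by auto

lemma is_cycle_card_incident_eq_2:
  assumes "is_cycle m C" and "e \<in> C" and "w \<in> ends e"
  shows "card {e \<in> C. w \<in> ends e} = 2"
proof -
  have "{e \<in> C. w \<in> ends e} \<noteq> {}" using assms(2,3) by blast
  moreover have "finite {e \<in> C. w \<in> ends e}" using is_cycle_finite[OF assms(1)] by simp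
  ultimately have "card {e \<in> C. w \<in> ends e} \<noteq> 0" by simp
  then show ?thesis using is_cycle_card_incident[OF assms(1), of w] by auto
qed

lemma is_cycle_length_Inl: "is_cycle m C \<Longrightarrow> m = 2 * card (fst ` C)"
  using card_eq_twice_card_image[of C fst] is_cycle_finite is_cycle_card
    is_cycle_card_incident_eq_2[where w = "Inl _"] by fastforce

lemma is_cycle_length_Inr: "is_cycle m C \<Longrightarrow> m = 2 * card ((fst \<circ> snd) ` C)"
  using card_eq_twice_card_image[of C "fst \<circ> snd"] is_cycle_finite is_cycle_card
    is_cycle_card_incident_eq_2[where w = "Inr _"] by fastforce

lemma is_cycle_crossing:
  assumes "is_cycle m C" and "splits B (fst ` C)"
  obtains b where "card {e \<in> C. fst (snd e) = b \<and> fst e \<in> B} = 1"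
proof -
  obtain xs es where "cycle_seq m xs es" "set es = C" using assms(1) by (rule is_cycleE)
  then show ?thesis using cycle_seq.crossing_vertex assms(2) that by blast
qed

lemma is_cycle_2_parallel:
  assumes "is_cycle 2 C"
  obtains a b where "\<forall>e \<in> C. fst e = a \<and> fst (snd e) = b"
proof -
  have "card (fst ` C) = 1" "card ((fst \<circ> snd) ` C) = 1"
    using is_cycle_length_Inl[OF assms] is_cycle_length_Inr[OF assms] by simp_all
  then obtain a b where "fst ` C = {a}" "(fst \<circ> snd) ` C = {b}" by (metis card_1_singletonE)
  then have "fst e = a \<and> fst (snd e) = b" if "e \<in> C" for e
    using that by (metis comp_apply image_eqI singletonD)
  then show ?thesis using that by blast
qed

lemma splits_Un_iff:
  assumes "X \<inter> Y \<noteq> {}"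
  shows "splits B (X \<union> Y) \<longleftrightarrow> splits B X \<or> splits B Y"
  using assms unfolding splits_def by blast

lemma card_le_one_or_subset_if_splits_disjoint_family:
  assumes disjoint: "\<forall>i\<in>J. \<forall>j\<in>J. i \<noteq> j \<longrightarrow> S i \<inter> S j = {}"
    and splits: "\<And>B. splits B A \<Longrightarrow> \<exists>j\<in>J. splits B (S j)"
  shows "card A \<le> 1 \<or> (\<exists>j\<in>J. A \<subseteq> S j)"
proof (cases "\<exists>j\<in>J. A \<inter> S j \<noteq> {}")
  case True
  then obtain j where j: "j \<in> J" "A \<inter> S j \<noteq> {}" by blast
  have "\<not> splits (S j) (S k)" if "k \<in> J" for k
    using disjoint j(1) that unfolding splits_def by (cases "k = j") auto
  then have "\<not> splits (S j) A" using splits by blast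
  then show ?thesis using j unfolding splits_def by blast
next
  case False
  have "A \<subseteq> {a}" if "a \<in> A" for a
  proof -
    have "\<not> splits {a} (S k)" if "k \<in> J" for k
      using False \<open>a \<in> A\<close> that unfolding splits_def by blast
    then have "\<not> splits {a} A" using splits by blast
    then show ?thesis using that unfolding splits_def by blast
  qed
  then have "A = {} \<or> (\<exists>a. A = {a})" by blast
  then show ?thesis by auto
qed

lemma sum_card_minus_one_merge_le:
  assumes "finite J" and "i \<in> J" and "j \<in> J" and "i \<noteq> j"
    and "finite (S i)" and "finite (S j)" and "S i \<inter> S j \<noteq> {}"
  shows "(\<Sum>k\<in>J - {j}. card ((S(i := S i \<union> S j)) k) - 1) \<le> (\<Sum>k\<in>J. card (S k) - 1)"
proof -
  let ?rest = "\<Sum>k\<in>J - {i} - {j}. card (S k) - 1"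
  have "card (S i \<union> S j) + 1 \<le> card (S i) + card (S j)"
    using card_Un_Int[OF assms(5,6)] assms(5-7) by (simp add: Suc_le_eq card_gt_0_iff)
  moreover have "S i \<noteq> {}" "S j \<noteq> {}" using assms(7) by auto
  ultimately have merged: "card (S i \<union> S j) - 1 \<le> (card (S i) - 1) + (card (S j) - 1)"
    using assms(5,6) by (simp add: card_gt_0_iff Suc_le_eq)
  have "(\<Sum>k\<in>J - {j}. card ((S(i := S i \<union> S j)) k) - 1)
      = (card (S i \<union> S j) - 1) + (\<Sum>k\<in>J - {j} - {i}. card ((S(i := S i \<union> S j)) k) - 1)"
    using assms(1-4) by (simp add: sum.remove[of "J - {j}" i])
  also have "(\<Sum>k\<in>J - {j} - {i}. card ((S(i := S i \<union> S j)) k) - 1) = ?rest"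
    by (rule sum.cong) auto
  also have "(\<Sum>k\<in>J. card (S k) - 1) = (card (S i) - 1) + ((card (S j) - 1) + ?rest)"
    using assms(1-4) sum.remove[OF assms(1,2), of "\<lambda>k. card (S k) - 1"]
      sum.remove[of "J - {i}" j "\<lambda>k. card (S k) - 1"] by simp
  ultimately show ?thesis using merged by linarith
qed

text \<open>The hypothesis says that A lies within one connected component of the hypergraph
  with edges S j; the bound is the vertex count of a connected hypergraph, proved by merging
  overlapping edges.\<close>

lemma card_le_sum_card_minus_one_if_splits:
  assumes "finite J" and "\<And>j. j \<in> J \<Longrightarrow> finite (S j)"
    and "\<And>B. splits B A \<Longrightarrow> \<exists>j\<in>J. splits B (S j)"
  shows "card A \<le> 1 + (\<Sum>j\<in>J. card (S j) - 1)"
  using assms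
proof (induction "card J" arbitrary: J S rule: less_induct)
  case less
  show ?case
  proof (cases "\<exists>i\<in>J. \<exists>j\<in>J. i \<noteq> j \<and> S i \<inter> S j \<noteq> {}")
    case True
    then obtain i j where ij: "i \<in> J" "j \<in> J" "i \<noteq> j" "S i \<inter> S j \<noteq> {}" by blast
    let ?S = "S(i := S i \<union> S j)"
    have merged_splits: "\<exists>k\<in>J - {j}. splits B (?S k)" if "splits B A" for B
    proof -
      obtain k where k: "k \<in> J" "splits B (S k)" using less.prems(3) \<open>splits B A\<close> by blast
      show ?thesis
      proof (cases "k = i \<or> k = j")
        case True
        then have "splits B (?S i)" using k splits_Un_iff[OF ij(4)] by auto
        then show ?thesis using ij by blast
      next
        case False
        then show ?thesis using k by (intro bexI[of _ k]) auto
      qed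
    qed
    have "card (J - {j}) < card J" using less.prems(1) ij(2) by (rule card_Diff1_less)
    then have "card A \<le> 1 + (\<Sum>k\<in>J - {j}. card (?S k) - 1)"
      by (rule less.hyps) (use less.prems(1,2) ij(2) merged_splits in auto)
    also have "\<dots> \<le> 1 + (\<Sum>k\<in>J. card (S k) - 1)"
      using sum_card_minus_one_merge_le[OF less.prems(1) ij(1-3) _ _ ij(4)] ij less.prems(2) by simp
    finally show ?thesis .
  next
    case False
    then have "card A \<le> 1 \<or> (\<exists>j\<in>J. A \<subseteq> S j)"
      using less.prems(3) by (intro card_le_one_or_subset_if_splits_disjoint_family) blast+
    then show ?thesis
    proof
      assume "\<exists>j\<in>J. A \<subseteq> S j"
      then obtain j where j: "j \<in> J" "A \<subseteq> S j" by blast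
      have "card A \<le> card (S j)" using j less.prems(2) by (simp add: card_mono)
      moreover have "card (S j) - 1 \<le> (\<Sum>k\<in>J. card (S k) - 1)"
        using member_le_sum[OF j(1), of "\<lambda>k. card (S k) - 1"] less.prems(1) by simp
      ultimately show ?thesis by linarith
    qed simp
  qed
qed

locale decomposition =
  fixes E :: "edge set" and ms :: "nat list" and Cs :: "edge set list"
  assumes cycle: "i < length ms \<Longrightarrow> is_cycle (ms ! i) (Cs ! i)"
    and disjoint: "i < length ms \<Longrightarrow> j < length ms \<Longrightarrow> i \<noteq> j \<Longrightarrow> Cs ! i \<inter> Cs ! j = {}"
    and union: "(\<Union>i<length ms. Cs ! i) = E"

lemma cycle_decompositionE:
  assumes "cycle_decomposition E ms"
  obtains Cs where "decomposition E ms Cs"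
  using assms unfolding cycle_decomposition_def decomposition_def by blast

context decomposition
begin

lemma finite_Cs: "i < length ms \<Longrightarrow> finite (Cs ! i)"
  using cycle is_cycle_finite by blast

lemma Cs_subset: "i < length ms \<Longrightarrow> Cs ! i \<subseteq> E"
  using union by blast

lemma card_filter_Union:
  assumes "I \<subseteq> {..<length ms}"
  shows "card {e \<in> (\<Union>i\<in>I. Cs ! i). P e} = (\<Sum>i\<in>I. card {e \<in> Cs ! i. P e})"
proof -
  have "{e \<in> (\<Union>i\<in>I. Cs ! i). P e} = (\<Union>i\<in>I. {e \<in> Cs ! i. P e})" by blast
  also have "card \<dots> = (\<Sum>i\<in>I. card {e \<in> Cs ! i. P e})"
  proof (rule card_UN_disjoint)
    show "finite I" using assms by (rule finite_subset) simp
    show "\<forall>i\<in>I. finite {e \<in> Cs ! i. P e}" using assms finite_Cs by auto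
    show "\<forall>i\<in>I. \<forall>j\<in>I. i \<noteq> j \<longrightarrow> {e \<in> Cs ! i. P e} \<inter> {e \<in> Cs ! j. P e} = {}"
      using assms disjoint by blast
  qed
  finally show ?thesis .
qed

lemma card_filter: "card {e \<in> E. P e} = (\<Sum>i<length ms. card {e \<in> Cs ! i. P e})"
  using card_filter_Union[of "{..<length ms}" P] union by simp

lemma even_card_filter:
  assumes "\<And>i. i < length ms \<Longrightarrow> even (card {e \<in> Cs ! i. P e})"
  shows "even (card {e \<in> E. P e})"
  unfolding card_filter by (rule dvd_sum) (simp add: assms)

lemma sum_ms: "(\<Sum>i<length ms. ms ! i) = card E"
proof -
  have "(\<Sum>i<length ms. ms ! i) = (\<Sum>i<length ms. card (Cs ! i))"
    by (rule sum.cong) (simp_all add: is_cycle_card[OF cycle])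
  then show ?thesis using card_filter[of "\<lambda>_. True"] by simp
qed

end

lemma lKvu_edges_eq: "lKvu_edges lam v u = {..<v} \<times> {..<u} \<times> {..<lam}"
  unfolding lKvu_edges_def by auto

lemma card_lKvu_edges: "card (lKvu_edges lam v u) = lam * v * u"
  by (simp add: lKvu_edges_eq card_cartesian_product)

lemma card_lKvu_edges_Inr:
  assumes "b < u"
  shows "card {e \<in> lKvu_edges lam v u. fst (snd e) = b \<and> fst e \<in> B} = lam * card (B \<inter> {..<v})"
proof -
  have "{e \<in> lKvu_edges lam v u. fst (snd e) = b \<and> fst e \<in> B} = (B \<inter> {..<v}) \<times> {b} \<times> {..<lam}"
    using assms by (auto simp: lKvu_edges_eq)
  then show ?thesis by (simp add: card_cartesian_product)
qed

lemma card_lKvu_edges_Inl: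
  assumes "a < v"
  shows "card {e \<in> lKvu_edges lam v u. fst e = a} = lam * u"
proof -
  have "{e \<in> lKvu_edges lam v u. fst e = a} = {a} \<times> {..<u} \<times> {..<lam}"
    using assms by (auto simp: lKvu_edges_eq)
  then show ?thesis by (simp add: card_cartesian_product)
qed

lemma card_lKvu_edges_parallel:
  assumes "a < v" and "b < u"
  shows "card {e \<in> lKvu_edges lam v u. (fst e, fst (snd e)) = (a, b)} = lam"
proof -
  have "{e \<in> lKvu_edges lam v u. (fst e, fst (snd e)) = (a, b)} = {a} \<times> {b} \<times> {..<lam}"
    using assms by (auto simp: lKvu_edges_eq)
  then show ?thesis by (simp add: card_cartesian_product)
qed

locale lKvu_decomposition = decomposition "lKvu_edges lam v u" ms Cs for lam v u :: nat and ms Cs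

context lKvu_decomposition
begin

lemma cycle_length_le:
  assumes "i < length ms"
  shows "ms ! i \<le> 2 * v" and "ms ! i \<le> 2 * u"
proof -
  have "fst ` (Cs ! i) \<subseteq> {..<v}" "(fst \<circ> snd) ` (Cs ! i) \<subseteq> {..<u}"
    using Cs_subset[OF assms] by (auto simp: lKvu_edges_eq)
  then have "card (fst ` (Cs ! i)) \<le> v" "card ((fst \<circ> snd) ` (Cs ! i)) \<le> u"
    by (metis card_lessThan card_mono finite_lessThan)+
  then show "ms ! i \<le> 2 * v" "ms ! i \<le> 2 * u"
    using is_cycle_length_Inl[OF cycle[OF assms]] is_cycle_length_Inr[OF cycle[OF assms]] by simp_all
qed

lemma even_lam_v:
  assumes "u > 0"
  shows "even (lam * v)"
proof -
  have "even (card {e \<in> lKvu_edges lam v u. Inr 0 \<in> ends e})"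
    by (rule even_card_filter) (use cycle is_cycle_even_card_incident in blast)
  then show ?thesis using card_lKvu_edges_Inr[OF assms, of lam v UNIV] by simp
qed

lemma even_lam_u:
  assumes "v > 0"
  shows "even (lam * u)"
proof -
  have "even (card {e \<in> lKvu_edges lam v u. Inl 0 \<in> ends e})"
    by (rule even_card_filter) (use cycle is_cycle_even_card_incident in blast)
  then show ?thesis using card_lKvu_edges_Inl[OF assms, of lam u] by simp
qed

lemma splits_other_cycle:
  assumes "even lam" and "p < length ms" and "splits B (fst ` (Cs ! p))"
  shows "\<exists>j\<in>{..<length ms} - {p}. splits B (fst ` (Cs ! j))"
proof (rule ccontr)
  assume no_other: "\<not> ?thesis"
  obtain b where b: "card {e \<in> Cs ! p. fst (snd e) = b \<and> fst e \<in> B} = 1"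
    using is_cycle_crossing[OF cycle[OF assms(2)] assms(3)] by blast
  let ?P = "\<lambda>e. fst (snd e) = b \<and> fst e \<in> B"
  have "{e \<in> Cs ! p. ?P e} \<noteq> {}" using b by force
  then have "b < u" using Cs_subset[OF assms(2)] by (auto simp: lKvu_edges_eq)
  then have "even (card {e \<in> lKvu_edges lam v u. ?P e})"
    using card_lKvu_edges_Inr assms(1) by simp
  moreover have "even (card {e \<in> Cs ! j. ?P e})" if "j \<in> {..<length ms} - {p}" for j
  proof (cases "fst ` (Cs ! j) \<subseteq> B")
    case True
    then have "{e \<in> Cs ! j. ?P e} = {e \<in> Cs ! j. Inr b \<in> ends e}" by auto
    then show ?thesis using is_cycle_even_card_incident[OF cycle[of j], of "Inr b"] that by simp
  next
    case False
    then have empty: "{e \<in> Cs ! j. ?P e} = {}" using no_other that unfolding splits_def by blast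
    show ?thesis unfolding empty by simp
  qed
  then have "even (\<Sum>j\<in>{..<length ms} - {p}. card {e \<in> Cs ! j. ?P e})" by (rule dvd_sum)
  moreover have "card {e \<in> lKvu_edges lam v u. ?P e}
      = card {e \<in> Cs ! p. ?P e} + (\<Sum>j\<in>{..<length ms} - {p}. card {e \<in> Cs ! j. ?P e})"
    unfolding card_filter using assms(2) by (simp add: sum.remove)
  ultimately show False using b by simp
qed

lemma length_ms_bound:
  assumes "even lam" and "p < length ms"
  shows "2 * length ms + 2 * ms ! p \<le> lam * v * u + 4"
proof -
  define J where "J = {..<length ms} - {p}"
  define S where "S j = fst ` (Cs ! j)" for j
  have half: "ms ! j = 2 * card (S j)" if "j < length ms" for j
    unfolding S_def using is_cycle_length_Inl[OF cycle[OF that]] .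
  have S_ne: "1 \<le> card (S j)" if "j \<in> J" for j
    using half[of j] cycle[of j] that unfolding J_def is_cycle_def by auto
  have "card (S p) \<le> 1 + (\<Sum>j\<in>J. card (S j) - 1)"
    by (rule card_le_sum_card_minus_one_if_splits)
      (use finite_Cs splits_other_cycle[OF assms] in \<open>auto simp: J_def S_def\<close>)
  also have "(\<Sum>j\<in>J. card (S j) - 1) = (\<Sum>j\<in>J. card (S j)) - card J"
    using sum_subtractf_nat[of J "\<lambda>_. 1" "\<lambda>j. card (S j)"] S_ne by simp
  finally have connected: "card (S p) \<le> 1 + ((\<Sum>j\<in>J. card (S j)) - card J)" .
  have "card J \<le> (\<Sum>j\<in>J. card (S j))"
    using sum_mono[of J "\<lambda>_. 1" "\<lambda>j. card (S j)"] S_ne by simp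
  moreover have "lam * v * u = 2 * card (S p) + 2 * (\<Sum>j\<in>J. card (S j))"
  proof -
    have "lam * v * u = (\<Sum>j<length ms. ms ! j)" by (simp add: sum_ms card_lKvu_edges)
    also have "\<dots> = ms ! p + (\<Sum>j\<in>J. ms ! j)" unfolding J_def using assms(2) by (simp add: sum.remove)
    also have "(\<Sum>j\<in>J. ms ! j) = (\<Sum>j\<in>J. 2 * card (S j))"
      by (rule sum.cong) (simp_all add: J_def half)
    finally show ?thesis using half[OF assms(2)] by (simp add: sum_distrib_left)
  qed
  moreover have "card J + 1 = length ms" using assms(2) by (simp add: J_def)
  ultimately show ?thesis using connected half[OF assms(2)] by linarith
qed

lemma two_cycles_bound:
  assumes "odd lam"
  shows "2 * nu 2 ms \<le> (lam - 1) * v * u"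
proof -
  define I where "I = {i. i < length ms \<and> ms ! i = 2}"
  define D where "D = (\<Union>i\<in>I. Cs ! i)"
  define key where "key e = (fst e, fst (snd e))" for e :: edge
  have I: "I \<subseteq> {..<length ms}" by (auto simp: I_def)
  have D: "D \<subseteq> lKvu_edges lam v u" using Cs_subset by (auto simp: D_def I_def)
  have "card D = (\<Sum>i\<in>I. card (Cs ! i))"
    using card_filter_Union[OF I, of "\<lambda>_. True"] by (simp only: D_def simp_thms Collect_mem_eq)
  also have "\<dots> = 2 * nu 2 ms"
    using is_cycle_card[OF cycle] by (simp add: I_def nu_def)
  finally have card_D: "card D = 2 * nu 2 ms" .
  have fibre: "card {e \<in> D. key e = q} \<le> lam - 1" if q: "q \<in> {..<v} \<times> {..<u}" for q
  proof -
    have "even (card {e \<in> Cs ! i. key e = q})" if "i \<in> I" for i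
    proof -
      have "is_cycle 2 (Cs ! i)" using cycle[of i] that by (simp add: I_def)
      then obtain a b where "\<forall>e \<in> Cs ! i. fst e = a \<and> fst (snd e) = b"
        by (rule is_cycle_2_parallel)
      then have "\<forall>e \<in> Cs ! i. key e = (a, b)" by (simp add: key_def)
      then have "{e \<in> Cs ! i. key e = q} = (if q = (a, b) then Cs ! i else {})" by auto
      then show ?thesis using is_cycle_card[OF \<open>is_cycle 2 (Cs ! i)\<close>] by simp
    qed
    then have "even (card {e \<in> D. key e = q})"
      unfolding D_def card_filter_Union[OF I] by (rule dvd_sum)
    moreover have "card {e \<in> D. key e = q} \<le> lam"
    proof -
      obtain a b where ab: "q = (a, b)" "a < v" "b < u" using q by blast
      have "{e \<in> D. key e = q} \<subseteq> {e \<in> lKvu_edges lam v u. key e = q}" using D by blast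
      then have "card {e \<in> D. key e = q} \<le> card {e \<in> lKvu_edges lam v u. key e = q}"
        by (rule card_mono[rotated]) (simp add: lKvu_edges_eq)
      also have "\<dots> = lam" using card_lKvu_edges_parallel[OF ab(2,3)] by (simp add: key_def ab(1))
      finally show ?thesis .
    qed
    ultimately show ?thesis using assms by (cases "card {e \<in> D. key e = q} = lam") auto
  qed
  have "key ` D \<subseteq> {..<v} \<times> {..<u}" using D by (auto simp: key_def lKvu_edges_eq)
  then have "card D = (\<Sum>q\<in>{..<v} \<times> {..<u}. card {e \<in> D. key e = q})"
    by (intro card_eq_sum_card_fibres finite_subset[OF D]) (simp_all add: lKvu_edges_eq)
  also have "\<dots> \<le> (\<Sum>q\<in>{..<v} \<times> {..<u}. lam - 1)" by (rule sum_mono) (rule fibre)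
  finally show ?thesis using card_D by (simp add: card_cartesian_product mult.commute)
qed

end

theorem theorem2:
  fixes lam v u :: nat and ms :: "nat list"
  assumes "lam > 0" and "v > 0" and "u > 0"
    and "sorted ms"
    and "\<forall>i<length ms. even (ms ! i)"
    and "cycle_decomposition (lKvu_edges lam v u) ms"
  shows "last ms \<le> 2 * min v u \<and>
         even (lam * v) \<and> even (lam * u) \<and>
         (even lam \<longrightarrow> real (length ms) \<le> real lam / 2 * real v * real u - real (last ms) + 2) \<and>
         (odd lam \<longrightarrow> 2 * nu 2 ms \<le> (lam - 1) * v * u)"
proof -
  obtain Cs where "decomposition (lKvu_edges lam v u) ms Cs"
    using assms(6) by (rule cycle_decompositionE)
  then interpret lKvu_decomposition lam v u ms Cs by (simp add: lKvu_decomposition_def)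
  have "(0, 0, 0) \<in> (\<Union>i<length ms. Cs ! i)"
    using union assms(1-3) by (simp add: lKvu_edges_def)
  then have "ms \<noteq> []" by auto
  then have last: "last ms = ms ! (length ms - 1)" and p: "length ms - 1 < length ms"
    by (simp_all add: last_conv_nth)
  have "even lam \<longrightarrow> 2 * length ms + 2 * last ms \<le> lam * v * u + 4"
    using length_ms_bound[OF _ p] by (simp add: last)
  then have "even lam \<longrightarrow> real (length ms) \<le> real lam / 2 * real v * real u - real (last ms) + 2"
    by (auto dest!: of_nat_mono[where 'a = real] simp: field_simps)
  then show ?thesis
    using cycle_length_le[OF p] even_lam_v[OF assms(3)] even_lam_u[OF assms(2)] two_cycles_bound
    by (simp add: last)
qed

end
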